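(* Let $\widehat{\mathcal T}^{bin}_{pl}$ be the completion (formal infinite sums, graded by number of internal vertices) of the linear span over a field $k$ of characteristic zero of planar binary trees, with the associative product $*$ described in the context, and let $\tau_l^{(n)}$ be the left comb with $n$ internal vertices. Put $X:=|+\sum_{n\ge1}\tau_l^{(n)}$. Then $$\log^*(X)=\sum_{n>0}\frac1n\sum_{t\ \text{planar binary},\ |t|=n}\frac{(-1)^{d(t)}}{\binom{n-1}{d(t)}}\,t,$$ where $|t|$ is the number of internal vertices of $t$ and $d(t)$ its number of descents.
   Context: A planar binary tree is a finite planar rooted tree in which every internal vertex has exactly two incoming edges (a left one and a right one) and one outgoing edge; leaves are the external incoming edges, and there is one root edge. The tree with no internal vertex is the single edge $|$. For planar binary trees $t_1,t_2$, $t_1\vee t_2$ is the tree obtained by grafting $t_1$ and $t_2$ as left and right subtrees on a new root vertex; every tree $t\ne|$ decomposes uniquely as $t=t_1\vee t_2$. Extend $\vee$ bilinearly. The product $*$ is the bilinear product defined recursively by $|*t=t*|=t$ and, for $s=s_1\vee s_2$, $t=t_1\vee t_2$, $s*t=s_1\vee(s_2*t)+(s*t_1)\vee t_2$; it is associative with unit $|$ and additive in the number of internal vertices, so it extends to the completion. Left combs: $\tau_l^{(0)}=|$, $\tau_l^{(n+1)}=\tau_l^{(n)}\vee|$. For $L$ with no degree-$0$ component, $\log^*(|+L):=\sum_{k\ge1}\frac{(-1)^{k+1}}{k}L^{*k}$. A leaf of a planar binary tree is a descent if it is not the leftmost leaf and it points to the left, i.e. it is the left incoming edge of its internal vertex.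 *)

theory Defs
  imports Main
begin

text \<open>Planar binary trees: Leaf is the single edge |, Node t1 t2 is t1 \<or> t2.\<close>
datatype ptree = Leaf | Node ptree ptree

fun isize :: "ptree \<Rightarrow> nat" where
  "isize Leaf = 0"
| "isize (Node l r) = Suc (isize l + isize r)"

text \<open>Number of descents: non-leftmost leaves that are left incoming edges.\<close>
fun descents :: "ptree \<Rightarrow> nat" where
  "descents Leaf = 0"
| "descents (Node l r) = descents l + descents r + (if r = Leaf then 0 else 1)"

fun lcomb :: "nat \<Rightarrow> ptree" where
  "lcomb 0 = Leaf"
| "lcomb (Suc n) = Node (lcomb n) Leaf"

text \<open>tcoeff s t r = coefficient of the tree r in the product s * t
  (s*t = s1 \<or> (s2*t) + (s*t1) \<or> t2, with | as unit).\<close>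
function tcoeff :: "ptree \<Rightarrow> ptree \<Rightarrow> ptree \<Rightarrow> nat" where
  "tcoeff Leaf t r = (if r = t then 1 else 0)"
| "tcoeff (Node s1 s2) Leaf r = (if r = Node s1 s2 then 1 else 0)"
| "tcoeff (Node s1 s2) (Node t1 t2) r =
     (case r of Leaf \<Rightarrow> 0
      | Node r1 r2 \<Rightarrow>
          (if r1 = s1 then tcoeff s2 (Node t1 t2) r2 else 0)
        + (if r2 = t2 then tcoeff (Node s1 s2) t1 r1 else 0))"
  by pat_completeness auto
termination
  by (relation "measure (\<lambda>(s, t, r). size s + size t)") auto

text \<open>Elements of the completion: formal (possibly infinite) sums of trees,
  represented by their coefficient functions. Product on the completion
  (each graded piece is finite, so the coefficients are finite sums).\<close>
definition sprod :: "(ptree \<Rightarrow> 'a::comm_ring_1) \<Rightarrow> (ptree \<Rightarrow> 'a) \<Rightarrow> ptree \<Rightarrow> 'a" where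
  "sprod f g r = (\<Sum>(s, t) \<in> {(s, t). isize s + isize t = isize r}.
                     f s * g t * of_nat (tcoeff s t r))"

definition sunit :: "ptree \<Rightarrow> 'a::comm_ring_1" where
  "sunit t = (if t = Leaf then 1 else 0)"

fun spow :: "(ptree \<Rightarrow> 'a::comm_ring_1) \<Rightarrow> nat \<Rightarrow> ptree \<Rightarrow> 'a" where
  "spow f 0 = sunit"
| "spow f (Suc k) = sprod f (spow f k)"

text \<open>Since L^{*k} is concentrated in degrees \<ge> k, the coefficient of r only
  receives contributions from k \<le> isize r; this truncation computes the
  infinite sum in the completion exactly.\<close>
definition slog :: "(ptree \<Rightarrow> 'a::field_char_0) \<Rightarrow> ptree \<Rightarrow> 'a" where
  "slog X r = (let L = (\<lambda>t. X t - sunit t) in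
     (\<Sum>k \<in> {1..isize r}. (-1) ^ (k + 1) / of_nat k * spow L k r))"

definition Xcombs :: "ptree \<Rightarrow> 'a::comm_ring_1" where
  "Xcombs t = (if \<exists>n. t = lcomb n then 1 else 0)"

end

theory Submission
  imports Defs
begin

text \<open>Write \<open>X = | + L\<close>, where \<open>L\<close> is the sum of all left combs with at least one vertex.
  In \<open>(s1 \<or> s2) * t\<close> the left subtree of the root is either \<open>s1\<close> or a tree containing \<open>s1\<close>, so the
  coefficient of \<open>r1 \<or> r2\<close> in \<open>L * g\<close> satisfies a recursion along the left branch of \<open>r\<close>. Iterating it
  shows that the coefficient of a tree with \<open>n\<close> vertices and \<open>d\<close> descents in \<open>L\<^sup>*\<^sup>k\<close> depends only on
  \<open>n\<close> and \<open>d\<close>: it is \<open>binomial (n-1-d) (k-1-d)\<close>. The coefficient of the logarithm is then the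
  alternating sum \<open>\<Sum>i. (-1)^i binomial N i / (i+d+1)\<close>, a Beta integral equal to
  \<open>d! N! / (N+d+1)!\<close>.\<close>

lemma isize_lcomb [simp]: "isize (lcomb n) = n"
  by (induction n) auto

lemma descents_lcomb [simp]: "descents (lcomb n) = 0"
  by (induction n) auto

lemma descents_eq_0_iff_lcomb: "descents t = 0 \<longleftrightarrow> (\<exists>n. t = lcomb n)"
proof
  show "descents t = 0 \<Longrightarrow> \<exists>n. t = lcomb n"
  proof (induction t)
    case (Node l r)
    then obtain n where "l = lcomb n" "r = Leaf" by (auto split: if_splits)
    then show ?case by (metis lcomb.simps(2))
  qed (metis lcomb.simps(1))
qed auto

lemma eq_lcomb_iff: "t = lcomb n \<longleftrightarrow> descents t = 0 \<and> isize t = n"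
proof
  assume "descents t = 0 \<and> isize t = n"
  then obtain m where "t = lcomb m" "isize t = n"
    using descents_eq_0_iff_lcomb by blast
  then show "t = lcomb n" by simp
qed (use descents_eq_0_iff_lcomb in auto)

lemma descents_less_isize: "t \<noteq> Leaf \<Longrightarrow> descents t < isize t"
proof (induction t)
  case (Node l r)
  then show ?case by (cases l; cases r) auto
qed simp

lemma finite_isize_le: "finite {t. isize t \<le> n}"
proof (induction n)
  case 0
  have "{t. isize t \<le> 0} = {Leaf}" by (auto elim: isize.elims)
  then show ?case by simp
next
  case (Suc n)
  have "{t. isize t \<le> Suc n} \<subseteq> insert Leaf (case_prod Node ` ({t. isize t \<le> n} \<times> {t. isize t \<le> n}))"
  proof
    show "t \<in> insert Leaf (case_prod Node ` ({t. isize t \<le> n} \<times> {t. isize t \<le> n}))"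
      if "t \<in> {t. isize t \<le> Suc n}" for t
      using that by (cases t) auto
  qed
  then show ?case using Suc by (auto intro: finite_subset)
qed

lemma finite_isize_add_eq: "finite {t. k + isize t = n}"
  by (rule finite_subset[OF _ finite_isize_le[of n]]) auto

lemma tcoeff_Leaf_right [simp]: "tcoeff s Leaf r = (if r = s then 1 else 0)"
  by (cases s) auto

lemma tcoeff_Node_Node:
  "tcoeff (Node s1 s2) t (Node r1 r2) =
     (if r1 = s1 then tcoeff s2 t r2 else 0)
   + (case t of Leaf \<Rightarrow> 0 | Node t1 t2 \<Rightarrow> if r2 = t2 then tcoeff (Node s1 s2) t1 r1 else 0)"
  by (cases t) auto

definition sprod_tree :: "ptree \<Rightarrow> (ptree \<Rightarrow> 'a::comm_ring_1) \<Rightarrow> ptree \<Rightarrow> 'a" where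
  "sprod_tree s g r = (\<Sum>t \<in> {t. isize s + isize t = isize r}. g t * of_nat (tcoeff s t r))"

lemma sprod_eq_sum_sprod_tree:
  "sprod f g r = (\<Sum>s \<in> {s. isize s \<le> isize r}. f s * sprod_tree s g r)"
proof -
  have pairs: "{(s, t). isize s + isize t = isize r}
      = Sigma {s. isize s \<le> isize r} (\<lambda>s. {t. isize s + isize t = isize r})"
    by auto
  show ?thesis
    unfolding sprod_def sprod_tree_def pairs
    by (simp add: sum.Sigma[symmetric] finite_isize_le finite_isize_add_eq sum_distrib_left mult.assoc)
qed

lemma sprod_tree_Leaf [simp]: "sprod_tree Leaf g r = g r"
proof -
  have "sprod_tree Leaf g r = (\<Sum>t \<in> {t. isize t = isize r}. if t = r then g r else 0)"
    unfolding sprod_tree_def by (intro sum.cong) auto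
  then show ?thesis using finite_isize_add_eq[of 0] by simp
qed

lemma sprod_tree_eq_0: "isize r < isize s \<Longrightarrow> sprod_tree s g r = 0"
  unfolding sprod_tree_def by (rule sum.neutral) auto

lemma sprod_tree_Node_Node:
  "sprod_tree (Node s1 s2) g (Node r1 r2) =
     (if r1 = s1 then sprod_tree s2 g r2 else 0)
   + sprod_tree (Node s1 s2) (\<lambda>u. g (Node u r2)) r1"
proof -
  let ?s = "Node s1 s2" and ?r = "Node r1 r2"
  let ?T = "{t. isize ?s + isize t = isize ?r}"
  let ?c = "\<lambda>t. case t of Leaf \<Rightarrow> 0 | Node t1 t2 \<Rightarrow> if r2 = t2 then tcoeff ?s t1 r1 else 0"
  have "sprod_tree ?s g ?r
      = (\<Sum>t \<in> ?T. g t * of_nat (if r1 = s1 then tcoeff s2 t r2 else 0)) + (\<Sum>t \<in> ?T. g t * of_nat (?c t))"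
    unfolding sprod_tree_def tcoeff_Node_Node by (simp add: distrib_left sum.distrib)
  also have "(\<Sum>t \<in> ?T. g t * of_nat (if r1 = s1 then tcoeff s2 t r2 else 0))
      = (if r1 = s1 then sprod_tree s2 g r2 else 0)"
    by (auto simp: sprod_tree_def intro!: sum.cong)
  also have "(\<Sum>t \<in> ?T. g t * of_nat (?c t)) = (\<Sum>t \<in> (\<lambda>u. Node u r2) ` {u. isize ?s + isize u = isize r1}. g t * of_nat (?c t))"
  proof (rule sum.mono_neutral_right[OF finite_isize_add_eq])
    show "(\<lambda>u. Node u r2) ` {u. isize ?s + isize u = isize r1} \<subseteq> ?T" by auto
    show "\<forall>t \<in> ?T - (\<lambda>u. Node u r2) ` {u. isize ?s + isize u = isize r1}. g t * of_nat (?c t) = 0"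
    proof
      fix t assume "t \<in> ?T - (\<lambda>u. Node u r2) ` {u. isize ?s + isize u = isize r1}"
      then show "g t * of_nat (?c t) = 0" by (cases t) auto
    qed
  qed
  also have "\<dots> = sprod_tree ?s (\<lambda>u. g (Node u r2)) r1"
    unfolding sprod_tree_def by (subst sum.reindex) (auto simp: inj_on_def)
  finally show ?thesis .
qed

definition Lcombs :: "ptree \<Rightarrow> 'a::comm_ring_1" where
  "Lcombs t = (if t \<noteq> Leaf \<and> descents t = 0 then 1 else 0)"

lemma Lcombs_lcomb_Suc: "Lcombs (lcomb (Suc n)) = 1"
  by (simp add: Lcombs_def)

lemma Xcombs_minus_sunit: "(\<lambda>t. Xcombs t - sunit t) = Lcombs"
proof
  show "Xcombs t - sunit t = Lcombs t" for t
    unfolding Xcombs_def sunit_def Lcombs_def descents_eq_0_iff_lcomb[symmetric]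
    by (cases t) auto
qed

lemma sprod_Lcombs:
  fixes g :: "ptree \<Rightarrow> 'a::comm_ring_1"
  shows "sprod Lcombs g r = (\<Sum>b < isize r. sprod_tree (lcomb (Suc b)) g r)"
proof -
  let ?C = "(lcomb \<circ> Suc) ` {..<isize r}"
  have "sprod Lcombs g r = (\<Sum>s \<in> ?C. Lcombs s * sprod_tree s g r)"
    unfolding sprod_eq_sum_sprod_tree
  proof (rule sum.mono_neutral_right[OF finite_isize_le])
    show "?C \<subseteq> {s. isize s \<le> isize r}" by auto
    show "\<forall>s \<in> {s. isize s \<le> isize r} - ?C. Lcombs s * sprod_tree s g r = 0"
    proof
      fix s assume s: "s \<in> {s. isize s \<le> isize r} - ?C"
      have "(Lcombs s :: 'a) = 0"
      proof (cases "descents s = 0")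
        case True
        then obtain n where n: "s = lcomb n" using descents_eq_0_iff_lcomb by blast
        with s have "n = 0" by (cases n) auto
        with n show ?thesis by (simp add: Lcombs_def)
      qed (simp add: Lcombs_def)
      then show "Lcombs s * sprod_tree s g r = 0" by simp
    qed
  qed
  also have "\<dots> = (\<Sum>b < isize r. sprod_tree (lcomb (Suc b)) g r)"
  proof -
    have inj: "inj_on (lcomb \<circ> Suc) {..<isize r}"
      by (rule inj_onI) (metis comp_apply isize_lcomb Suc_inject)
    show ?thesis unfolding sum.reindex[OF inj] by (simp add: Lcombs_lcomb_Suc del: lcomb.simps)
  qed
  finally show ?thesis .
qed

lemma sprod_Lcombs_Leaf: "sprod Lcombs g Leaf = 0"
  by (simp add: sprod_Lcombs)

lemma sprod_Lcombs_Node: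
  "sprod Lcombs g (Node r1 r2) =
     (if descents r1 = 0 then g r2 else 0) + sprod Lcombs (\<lambda>u. g (Node u r2)) r1"
proof -
  let ?n = "isize (Node r1 r2)" and ?g = "\<lambda>u. g (Node u r2)"
  have comb_factor: "sprod_tree (lcomb (Suc b)) g (Node r1 r2)
      = (if r1 = lcomb b then g r2 else 0) + sprod_tree (lcomb (Suc b)) ?g r1" for b
    using sprod_tree_Node_Node[of "lcomb b" Leaf g r1 r2] by (simp only: lcomb.simps sprod_tree_Leaf)
  have comb_terms: "(\<Sum>b < ?n. if r1 = lcomb b then g r2 else 0) = (if descents r1 = 0 then g r2 else 0)"
  proof -
    have "(\<Sum>b < ?n. if r1 = lcomb b then g r2 else 0)
        = (\<Sum>b < ?n. if b = isize r1 then (if descents r1 = 0 then g r2 else 0) else 0)"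
      by (intro sum.cong refl) (simp add: eq_lcomb_iff)
    then show ?thesis by simp
  qed
  have remaining_terms: "(\<Sum>b < ?n. sprod_tree (lcomb (Suc b)) ?g r1) = sprod Lcombs ?g r1"
    unfolding sprod_Lcombs
    by (rule sum.mono_neutral_right) (simp_all add: sprod_tree_eq_0 del: lcomb.simps)
  show ?thesis
    unfolding sprod_Lcombs[of g] comb_factor sum.distrib comb_terms remaining_terms ..
qed

text \<open>The trees \<open>t\<close> such that \<open>r\<close> occurs in \<open>lcomb a * t\<close> (\<open>a \<ge> 1\<close>) are: one with
  \<open>descents t = descents r\<close> for each \<open>a \<le> lcomb_prefix r\<close>, and, if \<open>r\<close> has descents, one with a
  descent less for \<open>a = lcomb_prefix r + 1\<close>; each occurs with coefficient 1.\<close>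

fun lcomb_prefix :: "ptree \<Rightarrow> nat" where
  "lcomb_prefix Leaf = 0"
| "lcomb_prefix (Node r1 r2) =
     (if descents r1 = 0 then isize r1 + (if r2 = Leaf then 1 else 0) else lcomb_prefix r1)"

lemma lcomb_prefix_eq_isize: "descents r = 0 \<Longrightarrow> lcomb_prefix r = isize r"
  by (induction r) (auto split: if_splits)

lemma lcomb_prefix_less: "descents r \<noteq> 0 \<Longrightarrow> descents r + lcomb_prefix r < isize r"
proof (induction r)
  case (Node r1 r2)
  show ?case
  proof (cases "descents r1 = 0")
    case True
    with Node.prems have "r2 \<noteq> Leaf" by auto
    with descents_less_isize[of r2] True show ?thesis by auto
  next
    case False
    with Node.IH(1) descents_less_isize[of r2] show ?thesis by (auto split: if_splits)
  qed
qed simp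

lemma sprod_Lcombs_size_descents:
  fixes \<phi> :: "nat \<Rightarrow> nat \<Rightarrow> 'a::comm_ring_1"
  shows "sprod Lcombs (\<lambda>u. \<phi> (isize u) (descents u)) r =
     (\<Sum>a \<in> {1..lcomb_prefix r}. \<phi> (isize r - a) (descents r))
     + (if descents r = 0 then 0 else \<phi> (isize r - lcomb_prefix r - 1) (descents r - 1))"
proof (induction r arbitrary: \<phi>)
  case Leaf
  then show ?case by (simp add: sprod_Lcombs_Leaf)
next
  case (Node r1 r2)
  define e where "e = (if r2 = Leaf then 0 else 1::nat)"
  define \<psi> where "\<psi> = (\<lambda>x y. \<phi> (Suc (x + isize r2)) (y + descents r2 + e))"
  have "(\<lambda>u. \<phi> (isize (Node u r2)) (descents (Node u r2))) = (\<lambda>u. \<psi> (isize u) (descents u))"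
    by (simp add: \<psi>_def e_def)
  then have split: "sprod Lcombs (\<lambda>u. \<phi> (isize u) (descents u)) (Node r1 r2) =
     (if descents r1 = 0 then \<phi> (isize r2) (descents r2) else 0)
     + (\<Sum>a \<in> {1..lcomb_prefix r1}. \<psi> (isize r1 - a) (descents r1))
     + (if descents r1 = 0 then 0 else \<psi> (isize r1 - lcomb_prefix r1 - 1) (descents r1 - 1))"
    unfolding sprod_Lcombs_Node by (simp only: Node.IH add.assoc)
  show ?case
  proof (cases "descents r1 = 0")
    case True
    then have "lcomb_prefix r1 = isize r1" by (rule lcomb_prefix_eq_isize)
    moreover have "(\<Sum>a \<in> {1..isize r1}. \<psi> (isize r1 - a) 0)
        = (\<Sum>a \<in> {1..isize r1}. \<phi> (isize (Node r1 r2) - a) (descents (Node r1 r2)))"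
      using True by (intro sum.cong) (auto simp: \<psi>_def e_def Suc_diff_le)
    ultimately show ?thesis
      using split True by (cases "r2 = Leaf") (simp_all add: add.commute)
  next
    case False
    have bound: "descents r1 + lcomb_prefix r1 < isize r1"
      using lcomb_prefix_less[OF False] .
    have "(\<Sum>a \<in> {1..lcomb_prefix r1}. \<psi> (isize r1 - a) (descents r1))
        = (\<Sum>a \<in> {1..lcomb_prefix r1}. \<phi> (isize (Node r1 r2) - a) (descents (Node r1 r2)))"
      using bound by (intro sum.cong) (auto simp: \<psi>_def e_def Suc_diff_le)
    moreover have "\<psi> (isize r1 - lcomb_prefix r1 - 1) (descents r1 - 1)
        = \<phi> (isize (Node r1 r2) - lcomb_prefix r1 - 1) (descents (Node r1 r2) - 1)"
      using bound False by (simp add: \<psi>_def e_def Suc_diff_Suc)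
    ultimately show ?thesis using split False by simp
  qed
qed

fun comb_power_coeff :: "nat \<Rightarrow> nat \<Rightarrow> nat \<Rightarrow> nat" where
  "comb_power_coeff 0 n d = (if n = 0 then 1 else 0)"
| "comb_power_coeff (Suc j) n d = (if 0 < n \<and> d \<le> j then (n - 1 - d) choose (j - d) else 0)"

lemma sum_choose_upper_partial:
  "l \<le> N \<Longrightarrow> (\<Sum>a \<in> {1..l}. (N - a) choose K) + ((N - l) choose Suc K) = N choose Suc K"
proof (induction l)
  case (Suc l)
  then have "N - l = Suc (N - Suc l)" by arith
  with Suc show ?case by (simp add: add.assoc)
qed simp

lemma comb_power_coeff_Suc_lcomb:
  "(\<Sum>a \<in> {1..n}. comb_power_coeff k (n - a) 0) = comb_power_coeff (Suc k) n 0"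
proof (cases k)
  case 0
  have "(\<Sum>a \<in> {1..n}. comb_power_coeff 0 (n - a) 0) = (\<Sum>a \<in> {1..n}. if a = n then 1 else 0)"
    by (rule sum.cong) auto
  with 0 show ?thesis by simp
next
  case (Suc j)
  show ?thesis
  proof (cases n)
    case (Suc m)
    have "(\<Sum>a \<in> {1..Suc m}. comb_power_coeff (Suc j) (Suc m - a) 0) = (\<Sum>a \<in> {1..m}. (m - a) choose j)"
      by (simp add: atLeastAtMostSuc_conv)
    also have "\<dots> = m choose Suc j"
      using sum_choose_upper_partial[of m m j] by simp
    finally show ?thesis using \<open>k = Suc j\<close> Suc by simp
  qed (simp add: Suc)
qed

lemma comb_power_coeff_Suc_descents:
  assumes "d \<noteq> 0" and "d + l < n"
  shows "(\<Sum>a \<in> {1..l}. comb_power_coeff k (n - a) d) + comb_power_coeff k (n - l - 1) (d - 1)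
    = comb_power_coeff (Suc k) n d"
proof (cases "k \<noteq> 0 \<and> d < k")
  case True
  then obtain j where j: "k = Suc j" "d \<le> j" by (cases k) auto
  have "(\<Sum>a \<in> {1..l}. comb_power_coeff k (n - a) d) = (\<Sum>a \<in> {1..l}. (n - 1 - d - a) choose (j - d))"
    using assms j by (intro sum.cong) (auto simp: algebra_simps)
  moreover have "comb_power_coeff k (n - l - 1) (d - 1) = (n - 1 - d - l) choose Suc (j - d)"
  proof -
    have "n - l - 1 - 1 - (d - 1) = n - 1 - d - l" "j - (d - 1) = Suc (j - d)"
      using assms j by arith+
    with assms j show ?thesis by simp
  qed
  moreover have "(\<Sum>a \<in> {1..l}. (n - 1 - d - a) choose (j - d)) + ((n - 1 - d - l) choose Suc (j - d))
      = (n - 1 - d) choose Suc (j - d)"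
    using assms by (intro sum_choose_upper_partial) arith
  ultimately show ?thesis using assms j by (simp add: Suc_diff_le)
next
  case False
  then have "(\<Sum>a \<in> {1..l}. comb_power_coeff k (n - a) d) = 0"
    using assms by (intro sum.neutral) (cases k; auto)
  with False assms show ?thesis by (cases k) auto
qed

lemma spow_Lcombs:
  "spow (Lcombs :: ptree \<Rightarrow> 'a::comm_ring_1) k r = of_nat (comb_power_coeff k (isize r) (descents r))"
proof (induction k arbitrary: r)
  case 0
  show ?case by (cases r) (simp_all add: sunit_def)
next
  case (Suc k)
  have "spow Lcombs (Suc k) r = sprod (Lcombs :: ptree \<Rightarrow> 'a) (\<lambda>u. of_nat (comb_power_coeff k (isize u) (descents u))) r"
  proof -
    have "spow (Lcombs :: ptree \<Rightarrow> 'a) k = (\<lambda>u. of_nat (comb_power_coeff k (isize u) (descents u)))"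
      by (rule ext) (rule Suc.IH)
    then show ?thesis by simp
  qed
  also have "\<dots> = of_nat ((\<Sum>a \<in> {1..lcomb_prefix r}. comb_power_coeff k (isize r - a) (descents r))
     + (if descents r = 0 then 0 else comb_power_coeff k (isize r - lcomb_prefix r - 1) (descents r - 1)))"
    using sprod_Lcombs_size_descents[of "\<lambda>x y. of_nat (comb_power_coeff k x y) :: 'a" r] by simp
  also have "\<dots> = of_nat (comb_power_coeff (Suc k) (isize r) (descents r))"
  proof (cases "descents r = 0")
    case True
    then show ?thesis
      using comb_power_coeff_Suc_lcomb[of k "isize r"] by (simp add: lcomb_prefix_eq_isize)
  next
    case False
    then show ?thesis
      using comb_power_coeff_Suc_descents[OF False lcomb_prefix_less[OF False], of k] by simp
  qed
  finally show ?case .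
qed

lemma sum_alternating_choose_Suc:
  "(\<Sum>i\<le>Suc N. (-1)^i * of_nat (Suc N choose i) / of_nat (i + d + 1) :: 'a::field_char_0)
   = (\<Sum>i\<le>N. (-1)^i * of_nat (N choose i) / of_nat (i + d + 1))
   - (\<Sum>i\<le>N. (-1)^i * of_nat (N choose i) / of_nat (i + Suc d + 1))"
proof -
  have pascal: "(-1)^Suc i * of_nat (Suc N choose Suc i) / of_nat (Suc i + d + 1)
      = (-1)^Suc i * of_nat (N choose Suc i) / of_nat (Suc i + d + 1)
      - (-1)^i * of_nat (N choose i) / (of_nat (i + Suc d + 1) :: 'a)" for i
    by (simp add: ring_distribs add_divide_distrib diff_divide_distrib)
  have "(\<Sum>i\<le>N. (-1)^i * of_nat (N choose i) / of_nat (i + d + 1) :: 'a)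
      = (\<Sum>i\<le>Suc N. (-1)^i * of_nat (N choose i) / of_nat (i + d + 1))"
    by simp
  then show ?thesis
    unfolding sum.atMost_Suc_shift[of _ N] pascal by (simp add: sum_subtractf)
qed

lemma sum_alternating_choose_div:
  "(\<Sum>i\<le>N. (-1)^i * of_nat (N choose i) / of_nat (i + d + 1) :: 'a::field_char_0)
   = fact d * fact N / fact (N + d + 1)"
proof (induction N arbitrary: d)
  case 0
  show ?case by simp
next
  case (Suc N)
  have "(\<Sum>i\<le>Suc N. (-1)^i * of_nat (Suc N choose i) / of_nat (i + d + 1) :: 'a)
      = fact d * fact N / fact (N + d + 1) - fact (Suc d) * fact N / fact (N + Suc d + 1)"
    by (simp only: sum_alternating_choose_Suc Suc.IH)
  also have "\<dots> = fact d * fact (Suc N) / fact (Suc N + d + 1)"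
  proof -
    define F where "F = (fact (N + d + 1) :: 'a)"
    define M where "M = (of_nat (N + d + 2) :: 'a)"
    have fact_eqs: "fact (N + Suc d + 1) = M * F" "fact (Suc N + d + 1) = M * F"
      unfolding M_def F_def by simp_all
    have "M \<noteq> 0"
      unfolding M_def add_2_eq_Suc' by (rule of_nat_neq_0)
    moreover have "F \<noteq> 0"
      unfolding F_def by (rule fact_nonzero)
    ultimately have "fact d * fact N / F - fact (Suc d) * fact N / (M * F)
        = (M * (fact d * fact N) - fact (Suc d) * fact N) / (M * F)"
      by (simp add: field_simps)
    also have "M * (fact d * fact N) - fact (Suc d) * fact N = fact d * fact (Suc N)"
      unfolding M_def by (simp add: algebra_simps)
    finally show ?thesis
      unfolding fact_eqs F_def[symmetric] .
  qed
  finally show ?case .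
qed

lemma log_coeff_comb_power:
  assumes "d \<le> m"
  shows "(\<Sum>k \<in> {1..Suc m}. (-1) ^ (k + 1) / of_nat k * of_nat (comb_power_coeff k (Suc m) d))
       = (1 / of_nat (Suc m) * ((-1) ^ d / of_nat (m choose d)) :: 'a::field_char_0)"
proof -
  define N where "N = m - d"
  have m: "m = N + d" using assms N_def by simp
  let ?g = "\<lambda>k. (-1) ^ (k + 1) / of_nat k * (of_nat (comb_power_coeff k (Suc m) d) :: 'a)"
  have "(\<Sum>k \<in> {1..Suc m}. ?g k) = (\<Sum>j \<in> {0..m}. ?g (Suc j))"
    using sum.shift_bounds_cl_Suc_ivl[of ?g 0 m] by simp
  also have "\<dots> = (\<Sum>j \<in> {d..m}. ?g (Suc j))"
    by (rule sum.mono_neutral_right) auto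
  also have "\<dots> = (\<Sum>i \<in> {0..N}. ?g (Suc (i + d)))"
    using sum.shift_bounds_cl_nat_ivl[of "\<lambda>j. ?g (Suc j)" 0 d N] m by simp
  also have "\<dots> = (-1) ^ d * (\<Sum>i\<le>N. (-1) ^ i * of_nat (N choose i) / of_nat (i + d + 1))"
    by (simp add: m sum_distrib_left atLeast0AtMost power_add field_simps)
  also have "\<dots> = (-1) ^ d * (fact d * fact N / fact (N + d + 1))"
    by (simp only: sum_alternating_choose_div)
  also have "\<dots> = 1 / of_nat (Suc m) * ((-1) ^ d / of_nat (m choose d))"
  proof -
    have binomial: "(of_nat (m choose d) :: 'a) = fact m / (fact d * fact N)"
      using binomial_fact[OF assms] N_def by simp
    have "(fact (N + d + 1) :: 'a) = of_nat (Suc m) * fact m"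
      using m by simp
    then show ?thesis unfolding binomial by (simp add: field_simps)
  qed
  finally show ?thesis .
qed

theorem corollary4p4:
  shows "slog (Xcombs :: ptree \<Rightarrow> 'a::field_char_0) =
    (\<lambda>t. if isize t = 0 then 0
         else (1 / of_nat (isize t)) *
              ((-1) ^ descents t / of_nat (isize t - 1 choose descents t)))"
proof
  fix t
  have "slog (Xcombs :: ptree \<Rightarrow> 'a) t =
     (\<Sum>k \<in> {1..isize t}. (-1) ^ (k + 1) / of_nat k * of_nat (comb_power_coeff k (isize t) (descents t)))"
    unfolding slog_def Let_def Xcombs_minus_sunit spow_Lcombs ..
  moreover have "descents t < isize t" if "isize t \<noteq> 0"
    using that descents_less_isize[of t] by (cases t) auto
  ultimately show "slog (Xcombs :: ptree \<Rightarrow> 'a) t = (if isize t = 0 then 0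
         else (1 / of_nat (isize t)) *
              ((-1) ^ descents t / of_nat (isize t - 1 choose descents t)))"
    using log_coeff_comb_power[of "descents t" "isize t - 1"] by (cases "isize t") auto
qed

end
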